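(* Let $a,b\in\mathbb N$ with $b\mid a$, let $\sigma$ be a $b$-core, and for $k\in\mathbb N$ let $$N_\sigma(k)=\#\{\lambda\in\mathcal C_a:\ \mathrm{core}_b\lambda=\sigma,\ \ell(\lambda)\le k\}.$$ Then there is a quasipolynomial $Q_\sigma(k)$ of degree $a-b$ and period $b$ such that $N_\sigma(k)=Q_\sigma(k)$ for all integers $k\ge\ell(\sigma)$. The leading coefficient of $Q_\sigma$ is $\dfrac{1}{\left((\frac ab-1)!\right)^{b}}$.
   Context: A partition $\lambda=(a_1,\dots,a_\ell)$ is a weakly decreasing finite sequence of positive integers; $\ell(\lambda)=\ell$ is its length. For $t\in\mathbb N$, a $t$-core is a partition whose Young diagram has no hook of size $t$; $\mathcal C_t$ is the set of $t$-cores, and $\mathrm{core}_t\lambda$ is obtained from $\lambda$ by successively removing rim hooks (border strips) of size $t$ until none remain (independent of choices). A function $Q:\mathbb N\to\mathbb Q$ is a quasipolynomial of period $p$ if for each $0\le i<p$ the function $n\mapsto Q(i+np)$ ($n\ge0$) is a polynomial $P_i$; its degree is the maximum degree of the $P_i$. "The leading coefficient of $Q$ is $c$" means each $P_i$ (for the stated period) has degree equal to that of $Q$ and leading coefficient $c$. *)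

theory Defs
  imports "HOL-Computational_Algebra.Polynomial"
begin

definition is_partition :: "nat list \<Rightarrow> bool" where
  "is_partition lam \<longleftrightarrow> sorted_wrt (\<ge>) lam \<and> (\<forall>x\<in>set lam. 0 < x)"

text \<open>Young diagram (0-indexed rows i and columns j).\<close>

definition cells :: "nat list \<Rightarrow> (nat \<times> nat) set" where
  "cells lam = {(i, j). i < length lam \<and> j < lam ! i}"

definition hook_length :: "nat list \<Rightarrow> nat \<Rightarrow> nat \<Rightarrow> nat" where
  "hook_length lam i j =
     (lam ! i - j - 1) + card {k. i < k \<and> k < length lam \<and> j < lam ! k} + 1"

definition is_core :: "nat \<Rightarrow> nat list \<Rightarrow> bool" where
  "is_core t lam \<longleftrightarrow> (\<forall>(i, j)\<in>cells lam. hook_length lam i j \<noteq> t)"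

definition adjacent_cell :: "nat \<times> nat \<Rightarrow> nat \<times> nat \<Rightarrow> bool" where
  "adjacent_cell c d \<longleftrightarrow>
     (fst c = fst d \<and> (snd c = snd d + 1 \<or> snd d = snd c + 1)) \<or>
     (snd c = snd d \<and> (fst c = fst d + 1 \<or> fst d = fst c + 1))"

definition cells_connected :: "(nat \<times> nat) set \<Rightarrow> bool" where
  "cells_connected S \<longleftrightarrow> S \<noteq> {} \<and>
     (\<forall>x\<in>S. \<forall>y\<in>S. (x, y) \<in> ({(c, d). c \<in> S \<and> d \<in> S \<and> adjacent_cell c d})\<^sup>*)"

definition no_2x2 :: "(nat \<times> nat) set \<Rightarrow> bool" where
  "no_2x2 S \<longleftrightarrow> \<not> (\<exists>i j. (i, j) \<in> S \<and> (i + 1, j) \<in> S \<and> (i, j + 1) \<in> S \<and> (i + 1, j + 1) \<in> S)"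

definition remove_rim_hook :: "nat \<Rightarrow> nat list \<Rightarrow> nat list \<Rightarrow> bool" where
  "remove_rim_hook t lam mu \<longleftrightarrow>
     is_partition mu \<and> cells mu \<subseteq> cells lam \<and>
     card (cells lam - cells mu) = t \<and>
     cells_connected (cells lam - cells mu) \<and> no_2x2 (cells lam - cells mu)"

text \<open>The t-core: the t-core reached by successively removing rim hooks of size t
  (independent of choices).\<close>

definition core :: "nat \<Rightarrow> nat list \<Rightarrow> nat list" where
  "core t lam = (THE mu. (remove_rim_hook t)\<^sup>*\<^sup>* lam mu \<and> is_core t mu)"

definition N_sigma :: "nat \<Rightarrow> nat \<Rightarrow> nat list \<Rightarrow> nat \<Rightarrow> nat" where
  "N_sigma a b sigma k =
     card {lam. is_partition lam \<and> is_core a lam \<and> core b lam = sigma \<and> length lam \<le> k}"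

definition quasipoly_deg_lead :: "(nat \<Rightarrow> rat) \<Rightarrow> nat \<Rightarrow> nat \<Rightarrow> rat \<Rightarrow> bool" where
  "quasipoly_deg_lead Q p d c \<longleftrightarrow>
     (\<forall>i<p. \<exists>P :: rat poly. degree P = d \<and> lead_coeff P = c \<and>
        (\<forall>n. Q (i + n * p) = poly P (of_nat n)))"

end

theory Submission
  imports Defs "HOL-Library.FuncSet"
begin

text \<open>Encode a partition with at most \<open>k\<close> parts by its beta-set \<open>{lam\<^sub>i + k - 1 - i}\<close>, read as
  beads on an abacus with \<open>t\<close> runners. A hook of length \<open>t\<close> is a bead \<open>x\<close> whose position
  \<open>x - t\<close> is empty, and removing a \<open>t\<close>-rim hook slides that bead one level up its runner. Hence
  \<open>lam\<close> is a \<open>t\<close>-core iff all runners are flush, and \<open>core t lam\<close> is the flush configuration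
  with the same runner counts.

  For \<open>a = q * b\<close>, runner \<open>r\<close> of the \<open>b\<close>-abacus splits into the runners \<open>r + b * j\<close> (\<open>j < q\<close>) of
  the \<open>a\<close>-abacus. So the \<open>a\<close>-cores with \<open>b\<close>-core \<open>sigma\<close> and at most \<open>k\<close> parts correspond to the
  ways of distributing, for every \<open>r < b\<close>, the \<open>d\<^sub>r(k)\<close> beads of runner \<open>r\<close> of \<open>sigma\<close> over \<open>q\<close>
  runners, and \<open>N_sigma(k) = \<Prod>\<^sub>r binom(d\<^sub>r(k) + q - 1, q - 1)\<close>. Finally
  \<open>d\<^sub>r(k + b) = d\<^sub>r(k) + 1\<close> for \<open>k \<ge> length sigma\<close>, so on each residue class of \<open>k\<close> modulo \<open>b\<close> this
  is a polynomial in \<open>k div b\<close> of degree \<open>b (q - 1) = a - b\<close> with leading coefficient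
  \<open>1 / (q - 1)!\<^sup>b\<close>.\<close>

section \<open>Partitions as antitone sequences\<close>

definition part :: "nat list \<Rightarrow> nat \<Rightarrow> nat" where
  "part lam i = (if i < length lam then lam ! i else 0)"

lemma part_antimono:
  assumes "is_partition lam" "i \<le> j"
  shows "part lam j \<le> part lam i"
proof (cases "j < length lam")
  case True
  then show ?thesis
    using assms unfolding is_partition_def part_def
    by (cases "i = j") (auto simp: sorted_wrt_iff_nth_less)
qed (simp add: part_def)

lemma part_pos_iff:
  assumes "is_partition lam"
  shows "0 < part lam i \<longleftrightarrow> i < length lam"
  using assms unfolding part_def is_partition_def by (auto simp: nth_mem)

lemma part_eq_0: "length lam \<le> i \<Longrightarrow> part lam i = 0"
  unfolding part_def by simp

lemma cells_eq: "cells lam = {(i, j). j < part lam i}"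
  unfolding cells_def part_def by (auto split: if_splits)

lemma partition_eqI:
  assumes "is_partition lam" "is_partition mu" "part lam = part mu"
  shows "lam = mu"
proof (rule nth_equalityI)
  have "i < length lam \<longleftrightarrow> i < length mu" for i
    using part_pos_iff assms by metis
  then show len: "length lam = length mu"
    by (metis less_irrefl linorder_neqE_nat)
  show "lam ! i = mu ! i" if "i < length lam" for i
    using that len fun_cong[OF assms(3), of i] unfolding part_def by simp
qed

definition partition_of :: "(nat \<Rightarrow> nat) \<Rightarrow> nat list" where
  "partition_of f = map f [0..<(LEAST i. f i = 0)]"

lemma partition_of:
  assumes "antimono f" and "f k = 0"
  shows "is_partition (partition_of f)" "part (partition_of f) = f" "length (partition_of f) \<le> k"
proof -
  define n where "n = (LEAST i. f i = 0)"
  have "f n = 0" and "n \<le> k"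
    unfolding n_def using assms(2) by (auto intro: LeastI Least_le)
  moreover have "0 < f i" if "i < n" for i
    using that not_less_Least unfolding n_def by blast
  moreover have "f i = 0" if "n \<le> i" for i
    using antimonoD[OF assms(1) that] \<open>f n = 0\<close> by simp
  moreover have "partition_of f = map f [0..<n]"
    unfolding partition_of_def n_def ..
  ultimately show "is_partition (partition_of f)" "part (partition_of f) = f"
    "length (partition_of f) \<le> k"
    using antimonoD[OF assms(1)]
    by (auto simp: is_partition_def sorted_wrt_iff_nth_less part_def)
qed

lemma finite_cells: "finite (cells lam)"
proof -
  have "cells lam \<subseteq> {..<length lam} \<times> {..<Max (insert 0 (set lam))}"
    unfolding cells_def by (auto intro!: order.strict_trans2[OF _ Max_ge] nth_mem)
  then show ?thesis
    using finite_subset by blast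
qed

lemma card_cells:
  assumes "is_partition lam" "length lam \<le> k"
  shows "card (cells lam) = (\<Sum>i<k. part lam i)"
proof -
  have "i < k" if "j < part lam i" for i j
    using that part_pos_iff[OF assms(1), of i] assms(2) by simp
  then have "cells lam = Sigma {..<k} (\<lambda>i. {..<part lam i})"
    unfolding cells_eq by auto
  then show ?thesis
    by (simp add: card_SigmaI)
qed

lemma length_le_if_cells_subset:
  assumes "is_partition lam" "is_partition mu" "cells mu \<subseteq> cells lam"
  shows "length mu \<le> length lam"
proof (rule ccontr)
  assume "\<not> length mu \<le> length lam"
  then have "(length lam, 0) \<in> cells mu"
    using part_pos_iff[OF assms(2)] unfolding cells_eq by auto
  then show False
    using assms(3) part_eq_0[of lam "length lam"] unfolding cells_eq by auto
qed

section \<open>Beta-sets\<close>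

text \<open>For \<open>length lam \<le> k\<close>, \<open>beta_set k lam\<close> is the set of first-column hook lengths of
  \<open>lam\<close> padded with zero parts to length \<open>k\<close>; it describes \<open>lam\<close> as a configuration of \<open>k\<close>
  beads on an abacus.\<close>

definition beta_num :: "nat list \<Rightarrow> nat \<Rightarrow> nat \<Rightarrow> nat" where
  "beta_num lam k i = part lam i + (k - 1 - i)"

definition beta_set :: "nat \<Rightarrow> nat list \<Rightarrow> nat set" where
  "beta_set k lam = beta_num lam k ` {..<k}"

lemma beta_num_strict_antimono:
  assumes "is_partition lam" "i < j" "j < k"
  shows "beta_num lam k j < beta_num lam k i"
  using part_antimono[OF assms(1), of i j] assms(2,3) unfolding beta_num_def by linarith

lemma beta_num_less_iff:
  assumes "is_partition lam" "i < k" "j < k"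
  shows "beta_num lam k j < beta_num lam k i \<longleftrightarrow> i < j"
  using beta_num_strict_antimono[OF assms(1)] assms
  by (metis less_asym' linorder_neqE_nat)

lemma inj_on_beta_num:
  assumes "is_partition lam"
  shows "inj_on (beta_num lam k) {..<k}"
  using beta_num_strict_antimono[OF assms]
  by (intro inj_onI) (metis lessThan_iff less_irrefl linorder_neqE_nat)

lemma finite_beta_set: "finite (beta_set k lam)"
  unfolding beta_set_def by simp

lemma card_beta_set:
  assumes "is_partition lam"
  shows "card (beta_set k lam) = k"
  unfolding beta_set_def using card_image[OF inj_on_beta_num[OF assms]] by simp

lemma beta_num_ge: "k - 1 - i \<le> beta_num lam k i"
  unfolding beta_num_def by simp

lemma sum_beta_set:
  assumes "is_partition lam"
  shows "\<Sum>(beta_set k lam) = (\<Sum>i<k. part lam i) + (\<Sum>i<k. k - 1 - i)"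
proof -
  have "\<Sum>(beta_set k lam) = (\<Sum>i<k. beta_num lam k i)"
    using sum.reindex[OF inj_on_beta_num[OF assms], of id] unfolding beta_set_def by simp
  also have "\<dots> = (\<Sum>i<k. part lam i) + (\<Sum>i<k. k - 1 - i)"
    unfolding beta_num_def by (rule sum.distrib)
  finally show ?thesis .
qed

lemma card_cells_diff:
  assumes "is_partition lam" "length lam \<le> k" "is_partition mu" "cells mu \<subseteq> cells lam"
  shows "card (cells lam - cells mu) + \<Sum>(beta_set k mu) = \<Sum>(beta_set k lam)"
proof -
  have "length mu \<le> k"
    using length_le_if_cells_subset[OF assms(1,3,4)] assms(2) by simp
  moreover have "card (cells lam - cells mu) = card (cells lam) - card (cells mu)"
    and "card (cells mu) \<le> card (cells lam)"
    using assms(4) finite_cells by (auto simp: card_Diff_subset card_mono)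
  ultimately show ?thesis
    using assms card_cells sum_beta_set by simp
qed

lemma card_beta_set_greater:
  assumes "is_partition lam" "i < k"
  shows "card {y \<in> beta_set k lam. beta_num lam k i < y} = i"
proof -
  have "{y \<in> beta_set k lam. beta_num lam k i < y} = beta_num lam k ` {..<i}"
    using beta_num_less_iff[OF assms(1) _ assms(2)] assms(2)
    unfolding beta_set_def by auto
  moreover have "inj_on (beta_num lam k) {..<i}"
    using inj_on_subset[OF inj_on_beta_num[OF assms(1)]] assms(2) by auto
  ultimately show ?thesis
    by (simp add: card_image)
qed

lemma beta_set_inj:
  assumes "is_partition lam" "is_partition mu" "length lam \<le> k" "length mu \<le> k"
    and "beta_set k lam = beta_set k mu"
  shows "lam = mu"
proof (rule partition_eqI[OF assms(1,2)], rule ext)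
  fix i
  show "part lam i = part mu i"
  proof (cases "i < k")
    case True
    then obtain i' where i': "i' < k" "beta_num lam k i = beta_num mu k i'"
      using assms(5) unfolding beta_set_def by (metis imageE image_eqI lessThan_iff)
    \<comment> \<open>both beta-numbers have exactly \<open>i\<close> resp. \<open>i'\<close> larger elements in the common beta-set\<close>
    have "i = i'"
      using card_beta_set_greater[OF assms(1) True] card_beta_set_greater[OF assms(2) i'(1)]
        assms(5) i'(2) by simp
    then show ?thesis
      using i' unfolding beta_num_def by simp
  qed (use assms(3,4) part_eq_0 in simp)
qed

lemma beta_set_surj:
  assumes "finite B" "card B = k"
  shows "\<exists>lam. is_partition lam \<and> length lam \<le> k \<and> beta_set k lam = B"
  using assms
proof (induction k arbitrary: B)
  case 0
  then show ?case
    by (intro exI[of _ "[]"]) (simp add: is_partition_def beta_set_def)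
next
  case (Suc k)
  define M where "M = Max B"
  have MB: "M \<in> B" and M_gt: "\<And>y. y \<in> B - {M} \<Longrightarrow> y < M"
    using Suc.prems Max_in Max_ge unfolding M_def by (fastforce, fastforce)
  obtain mu where mu: "is_partition mu" "length mu \<le> k" "beta_set k mu = B - {M}"
    using Suc.IH[of "B - {M}"] Suc.prems MB by auto
  have M_ge: "part mu 0 + k \<le> M"
  proof (cases "k = 0")
    case False
    then have "beta_num mu k 0 \<in> B - {M}"
      using mu(3) unfolding beta_set_def by auto
    then show ?thesis
      using M_gt False unfolding beta_num_def by fastforce
  qed (use mu(2) part_eq_0 in simp)
  \<comment> \<open>the new largest bead \<open>M\<close> becomes a new first row of length \<open>M - k\<close>\<close>
  define f where "f i = (if i = 0 then M - k else part mu (i - 1))" for i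
  have "antimono f"
    unfolding antimono_iff_le_Suc f_def
    using M_ge part_antimono[OF mu(1)] by (auto split: nat.split)
  moreover have "f (Suc k) = 0"
    unfolding f_def using part_eq_0 mu(2) by simp
  ultimately have lam: "is_partition (partition_of f)" "part (partition_of f) = f"
    "length (partition_of f) \<le> Suc k"
    using partition_of by blast+
  have "beta_set (Suc k) (partition_of f) =
      insert (beta_num (partition_of f) (Suc k) 0)
        ((\<lambda>i. beta_num (partition_of f) (Suc k) (Suc i)) ` {..<k})"
    unfolding beta_set_def lessThan_Suc_eq_insert_0 by (simp add: image_image)
  also have "\<dots> = insert M (beta_set k mu)"
    unfolding beta_set_def beta_num_def lam(2) f_def using M_ge by simp
  finally show ?case
    using lam MB mu(3) by (intro exI[of _ "partition_of f"]) auto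
qed

section \<open>Hooks and gaps in beta-sets\<close>

definition sub_closed :: "nat \<Rightarrow> nat set \<Rightarrow> bool" where
  "sub_closed t B \<longleftrightarrow> (\<forall>x\<in>B. t \<le> x \<longrightarrow> x - t \<in> B)"

lemma hook_length_eq:
  assumes "(i, j) \<in> cells lam"
  shows "hook_length lam i j = (part lam i - j - 1) + card {i'. i < i' \<and> j < part lam i'} + 1"
proof -
  have "{i'. i < i' \<and> i' < length lam \<and> j < lam ! i'} = {i'. i < i' \<and> j < part lam i'}"
    unfolding part_def by auto
  moreover have "lam ! i = part lam i"
    using assms unfolding cells_def part_def by auto
  ultimately show ?thesis
    unfolding hook_length_def by simp
qed

lemma leg_eq:
  assumes "is_partition lam" "j < part lam g" "part lam (Suc g) \<le> j" "i \<le> g"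
  shows "{i'. i < i' \<and> j < part lam i'} = {i<..g}"
proof (intro set_eqI iffI)
  fix i' assume "i' \<in> {i'. i < i' \<and> j < part lam i'}"
  moreover have "part lam i' \<le> part lam (Suc g)" if "g < i'"
    using part_antimono[OF assms(1)] that by simp
  ultimately show "i' \<in> {i<..g}"
    using assms(3) by (auto simp: not_less[symmetric])
next
  fix i' assume "i' \<in> {i<..g}"
  then show "i' \<in> {i'. i < i' \<and> j < part lam i'}"
    using part_antimono[OF assms(1), of i' g] assms(2) by auto
qed

text \<open>The row \<open>g\<close> produced here is the last row whose beta-number exceeds the gap \<open>y\<close>;
  the gap corresponds to the cell \<open>(g, y - (k - 1 - g))\<close>, the lowest cell of its column.\<close>

lemma row_above_gap:
  assumes lam: "is_partition lam" "length lam \<le> k" and "p < k"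
    and y: "y < beta_num lam k p" "y \<notin> beta_set k lam"
  obtains g where "p \<le> g" "g < k" "k - 1 - g \<le> y"
    "y - (k - 1 - g) < part lam g" "part lam (Suc g) \<le> y - (k - 1 - g)"
proof -
  define G where "G = {g. g < k \<and> y < beta_num lam k g}"
  have "p \<in> G" "finite G"
    unfolding G_def using assms by auto
  define g where "g = Max G"
  have "g \<in> G" "p \<le> g"
    unfolding g_def using \<open>p \<in> G\<close> \<open>finite G\<close> by (auto intro: Max_in)
  then have g: "g < k" "y < beta_num lam k g"
    unfolding G_def by auto
  have next_row: "beta_num lam k (Suc g) < y \<and> k - 1 - Suc g \<le> y - 1" if "Suc g < k"
  proof -
    have "beta_num lam k (Suc g) \<le> y"
      using that Max_ge[OF \<open>finite G\<close>, of "Suc g"] unfolding g_def G_def by fastforce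
    moreover have "beta_num lam k (Suc g) \<noteq> y"
      using y(2) that unfolding beta_set_def by auto
    ultimately show ?thesis
      using beta_num_ge[of k "Suc g" lam] by linarith
  qed
  have "k - 1 - g \<le> y"
    using next_row g(1) by (cases "Suc g < k") auto
  moreover have "part lam (Suc g) \<le> y - (k - 1 - g)"
  proof (cases "Suc g < k")
    case True
    then show ?thesis
      using next_row unfolding beta_num_def by linarith
  qed (use lam(2) part_eq_0 in simp)
  ultimately show ?thesis
    using that \<open>p \<le> g\<close> g unfolding beta_num_def by simp
qed

lemma hook_of_gap:
  assumes lam: "is_partition lam" "length lam \<le> k" and "0 < t" "p < k"
    and "t \<le> beta_num lam k p" "beta_num lam k p - t \<notin> beta_set k lam"
  shows "\<exists>(i, j)\<in>cells lam. hook_length lam i j = t"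
proof -
  define y where "y = beta_num lam k p - t"
  obtain g where g: "p \<le> g" "g < k" "k - 1 - g \<le> y"
    "y - (k - 1 - g) < part lam g" "part lam (Suc g) \<le> y - (k - 1 - g)"
    using row_above_gap[OF lam \<open>p < k\<close>, of y] assms(3,5,6) unfolding y_def by auto
  define j where "j = y - (k - 1 - g)"
  have cell: "(p, j) \<in> cells lam"
    using g(4) part_antimono[OF lam(1) g(1)] unfolding cells_eq j_def by auto
  have "hook_length lam p j = (part lam p - j - 1) + card {p<..g} + 1"
    using hook_length_eq[OF cell] leg_eq[OF lam(1) g(4,5,1)] unfolding j_def by simp
  also have "\<dots> = t"
    using g part_antimono[OF lam(1) g(1)] assms(5) unfolding j_def y_def beta_num_def by simp
  finally show ?thesis
    using cell by blast
qed

lemma gap_of_hook: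
  assumes lam: "is_partition lam" "length lam \<le> k"
    and cell: "(i, j) \<in> cells lam" and "hook_length lam i j = t"
  shows "\<exists>x\<in>beta_set k lam. t \<le> x \<and> x - t \<notin> beta_set k lam"
proof -
  define G where "G = {g. j < part lam g}"
  have "i \<in> G" and G_sub: "G \<subseteq> {..<length lam}"
    using cell part_pos_iff[OF lam(1)] unfolding G_def cells_eq by force+
  then have "finite G"
    using finite_subset by blast
  define g where "g = Max G"
  have "g \<in> G" "i \<le> g"
    unfolding g_def using \<open>i \<in> G\<close> \<open>finite G\<close> by (auto intro: Max_in)
  then have g: "j < part lam g" "g < k" "part lam (Suc g) \<le> j"
    using G_sub lam(2) Max_ge[OF \<open>finite G\<close>, of "Suc g"] unfolding G_def g_def by force+
  have t: "t = (part lam i - j - 1) + (g - i) + 1"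
    using hook_length_eq[OF cell] leg_eq[OF lam(1) g(1,3) \<open>i \<le> g\<close>] assms(4) by simp
  define x where "x = beta_num lam k i"
  have "x \<in> beta_set k lam" "t \<le> x"
    using \<open>i \<le> g\<close> g(2) t cell unfolding x_def beta_set_def beta_num_def cells_eq by auto
  moreover have "x - t \<notin> beta_set k lam"
  proof
    assume "x - t \<in> beta_set k lam"
    then obtain i' where "i' < k" "beta_num lam k i' = j + (k - 1 - g)"
      using \<open>i \<le> g\<close> g(2) t cell unfolding x_def beta_set_def beta_num_def cells_eq by auto
    moreover have "part lam g \<le> part lam i'" if "i' \<le> g"
      using part_antimono[OF lam(1) that] .
    moreover have "part lam i' \<le> part lam (Suc g)" if "\<not> i' \<le> g"
      using part_antimono[OF lam(1)] that by simp
    ultimately show False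
      using g unfolding beta_num_def by (cases "i' \<le> g") linarith+
  qed
  ultimately show ?thesis
    by blast
qed

lemma is_core_iff_sub_closed:
  assumes "is_partition lam" "length lam \<le> k" "0 < t"
  shows "is_core t lam \<longleftrightarrow> sub_closed t (beta_set k lam)"
proof
  assume "is_core t lam"
  then show "sub_closed t (beta_set k lam)"
    using hook_of_gap[OF assms(1,2,3)] unfolding is_core_def sub_closed_def beta_set_def
    by blast
next
  assume "sub_closed t (beta_set k lam)"
  then show "is_core t lam"
    using gap_of_hook[OF assms(1,2)] unfolding is_core_def sub_closed_def by blast
qed

section \<open>Rim hooks move beads to gaps\<close>

definition adj_rel :: "(nat \<times> nat) set \<Rightarrow> ((nat \<times> nat) \<times> (nat \<times> nat)) set" where
  "adj_rel S = {(c, d). c \<in> S \<and> d \<in> S \<and> adjacent_cell c d}"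

lemma converse_adj_rel: "(adj_rel S)\<inverse> = adj_rel S"
  unfolding adj_rel_def adjacent_cell_def by auto

lemma row_in_rtrancl_adj_rel:
  assumes "\<And>c. c1 \<le> c \<Longrightarrow> c \<le> c2 \<Longrightarrow> (i, c) \<in> S" "c1 \<le> c2"
  shows "((i, c2), (i, c1)) \<in> (adj_rel S)\<^sup>*"
  using assms
proof (induction c2)
  case (Suc c2)
  show ?case
  proof (cases "c1 = Suc c2")
    case False
    then have "((i, Suc c2), (i, c2)) \<in> adj_rel S"
      using Suc.prems unfolding adj_rel_def adjacent_cell_def by auto
    then show ?thesis
      using Suc False by (meson converse_rtrancl_into_rtrancl le_SucE le_SucI)
  qed simp
qed simp

lemma cells_connected_rows:
  assumes S: "S = {(i, c). p \<le> i \<and> i \<le> g \<and> lo i \<le> c \<and> c < hi i}"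
    and "p \<le> g" and ne: "\<And>i. p \<le> i \<Longrightarrow> i \<le> g \<Longrightarrow> lo i < hi i"
    and overlap: "\<And>i. p \<le> i \<Longrightarrow> i < g \<Longrightarrow> lo (Suc i) \<le> lo i \<and> lo i < hi (Suc i)"
  shows "cells_connected S"
proof -
  have base: "(g, lo g) \<in> S"
    using S ne \<open>p \<le> g\<close> by auto
  have to_base: "((i, c), (g, lo g)) \<in> (adj_rel S)\<^sup>*" if "(i, c) \<in> S" for i c
    using that
  proof (induction "g - i" arbitrary: i c)
    case 0
    then show ?case
      using row_in_rtrancl_adj_rel[of "lo g" c g S] S by auto
  next
    case (Suc n)
    then have i: "p \<le> i" "i < g" "lo i \<le> c" "c < hi i"
      using S by auto
    have "((i, c), (i, lo i)) \<in> (adj_rel S)\<^sup>*"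
      using row_in_rtrancl_adj_rel[of "lo i" c i S] S i by auto
    moreover have "((i, lo i), (Suc i, lo i)) \<in> adj_rel S"
      using overlap[OF i(1,2)] ne[OF i(1)] i unfolding adj_rel_def adjacent_cell_def S by auto
    moreover have "((Suc i, lo i), (g, lo g)) \<in> (adj_rel S)\<^sup>*"
      using Suc(1)[of "Suc i" "lo i"] Suc(2) overlap[OF i(1,2)] ne[OF i(1)] i S by auto
    ultimately show ?case
      by (meson converse_rtrancl_into_rtrancl rtrancl_trans)
  qed
  have "(x, y) \<in> (adj_rel S)\<^sup>*" if "x \<in> S" "y \<in> S" for x y
    using to_base[of "fst x" "snd x"] to_base[of "fst y" "snd y"] that
      rtrancl_converseI[of y "(g, lo g)" "adj_rel S"] converse_adj_rel
    by (metis prod.collapse rtrancl_trans)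
  then show ?thesis
    using base unfolding cells_connected_def adj_rel_def by blast
qed

lemma rows_overlap_if_cells_connected:
  assumes S: "S = {(i, c). lo i \<le> c \<and> c < hi i}" and "cells_connected S"
    and "(p, c1) \<in> S" "(g, c2) \<in> S" "p \<le> i" "i < g"
  shows "lo i < hi (Suc i)"
proof (rule ccontr)
  assume no_overlap: "\<not> lo i < hi (Suc i)"
  define A where "A = {u \<in> S. fst u \<le> i}"
  \<comment> \<open>no adjacency step leaves the rows up to \<open>i\<close>\<close>
  have step: "v \<in> A" if "u \<in> A" "(u, v) \<in> adj_rel S" for u v
  proof (rule ccontr)
    assume "v \<notin> A"
    then have "fst v = Suc (fst u)" "fst u = i" "snd u = snd v" "u \<in> S" "v \<in> S"
      using that unfolding A_def adj_rel_def adjacent_cell_def by auto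
    then show False
      using no_overlap unfolding S by (cases u; cases v) auto
  qed
  have "\<forall>x\<in>S. \<forall>y\<in>S. (x, y) \<in> (adj_rel S)\<^sup>*"
    using assms(2) unfolding cells_connected_def adj_rel_def by simp
  then have "((p, c1), (g, c2)) \<in> (adj_rel S)\<^sup>*"
    using assms(3,4) by blast
  then have "(g, c2) \<in> A"
  proof (induction rule: rtrancl_induct)
    case base
    show ?case
      using assms(3,5) unfolding A_def by simp
  qed (rule step)
  then show False
    using \<open>i < g\<close> unfolding A_def by auto
qed

text \<open>\<open>strip_removed lam mu p g\<close>: the skew shape \<open>lam/mu\<close> is a border strip occupying exactly
  the rows \<open>p, \<dots>, g\<close>.\<close>

definition strip_removed :: "nat list \<Rightarrow> nat list \<Rightarrow> nat \<Rightarrow> nat \<Rightarrow> bool" where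
  "strip_removed lam mu p g \<longleftrightarrow> p \<le> g \<and> part mu g < part lam g \<and>
     (\<forall>i. i < p \<or> g < i \<longrightarrow> part mu i = part lam i) \<and>
     (\<forall>i. p \<le> i \<and> i < g \<longrightarrow> part mu i = part lam (Suc i) - 1)"

lemma strip_removedD:
  assumes "strip_removed lam mu p g"
  shows "p \<le> g" "part mu g < part lam g"
    and "i < p \<or> g < i \<Longrightarrow> part mu i = part lam i"
    and "p \<le> i \<Longrightarrow> i < g \<Longrightarrow> part mu i = part lam (Suc i) - 1"
  using assms unfolding strip_removed_def by auto

lemma remove_rim_hook_if_strip_removed:
  assumes lam: "is_partition lam" and mu: "is_partition mu"
    and strip: "strip_removed lam mu p g" and card: "card (cells lam - cells mu) = t"
  shows "remove_rim_hook t lam mu"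
proof -
  note def = strip_removedD[OF strip]
  have lam_pos: "0 < part lam (Suc i)" if "i < g" for i
    using part_antimono[OF lam, of "Suc i" g] that def(2) by linarith
  have le: "part mu i \<le> part lam i" for i
  proof -
    consider "i < p \<or> g < i" | "i = g" | "p \<le> i" "i < g"
      by linarith
    then show ?thesis
      using def(2) def(3)[of i] def(4)[of i] part_antimono[OF lam, of i "Suc i"] by cases auto
  qed
  have "p \<le> i \<and> i \<le> g" if "part mu i < part lam i" for i
    using def(3)[of i] that by (metis less_irrefl not_le)
  then have S: "cells lam - cells mu = {(i, c). p \<le> i \<and> i \<le> g \<and> part mu i \<le> c \<and> c < part lam i}"
    unfolding cells_eq by (auto simp: not_less)
  have "cells mu \<subseteq> cells lam"
    using le unfolding cells_eq by (auto intro: order.strict_trans2)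
  moreover have "cells_connected (cells lam - cells mu)"
  proof (rule cells_connected_rows[OF S def(1)])
    show "part mu i < part lam i" if "p \<le> i" "i \<le> g" for i
    proof (cases "i = g")
      case False
      then show ?thesis
        using def(4)[of i] that lam_pos[of i] part_antimono[OF lam, of i "Suc i"] by simp
    qed (use def(2) in simp)
    show "part mu (Suc i) \<le> part mu i \<and> part mu i < part lam (Suc i)" if "p \<le> i" "i < g" for i
      using part_antimono[OF mu, of i "Suc i"] def(4)[OF that] lam_pos[OF that(2)] by simp
  qed
  moreover have "\<not> (p \<le> i \<and> i + 1 \<le> g \<and> part mu i \<le> c \<and> c + 1 < part lam (i + 1))" for i c
    using def(4)[of i] by auto
  then have "no_2x2 (cells lam - cells mu)"
    unfolding no_2x2_def S by auto
  ultimately show ?thesis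
    using mu card unfolding remove_rim_hook_def by blast
qed

lemma part_le_if_cells_subset:
  assumes "cells mu \<subseteq> cells lam"
  shows "part mu i \<le> part lam i"
proof (rule ccontr)
  assume "\<not> part mu i \<le> part lam i"
  then have "(i, part lam i) \<in> cells mu"
    unfolding cells_eq by auto
  then show False
    using assms unfolding cells_eq by auto
qed

lemma part_Suc_le_if_no_2x2:
  assumes "is_partition lam" "is_partition mu" "no_2x2 (cells lam - cells mu)"
  shows "part lam (Suc i) \<le> part mu i + 1"
proof (rule ccontr)
  assume "\<not> part lam (Suc i) \<le> part mu i + 1"
  then have "(i, part mu i) \<in> cells lam - cells mu \<and> (i + 1, part mu i) \<in> cells lam - cells mu \<and>
      (i, part mu i + 1) \<in> cells lam - cells mu \<and> (i + 1, part mu i + 1) \<in> cells lam - cells mu"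
    using part_antimono[OF assms(1), of i "Suc i"] part_antimono[OF assms(2), of i "Suc i"]
    unfolding cells_eq by auto
  then show False
    using assms(3) unfolding no_2x2_def by blast
qed

lemma strip_removed_if_remove_rim_hook:
  assumes lam: "is_partition lam" and rim: "remove_rim_hook t lam mu"
  obtains p g where "strip_removed lam mu p g" "g < length lam"
proof -
  have mu: "is_partition mu" and sub: "cells mu \<subseteq> cells lam"
    and conn: "cells_connected (cells lam - cells mu)" and no2: "no_2x2 (cells lam - cells mu)"
    using rim unfolding remove_rim_hook_def by auto
  define S where "S = cells lam - cells mu"
  have S: "S = {(i, c). part mu i \<le> c \<and> c < part lam i}"
    unfolding S_def cells_eq by auto
  define R where "R = {i. part mu i < part lam i}"
  have R_sub: "R \<subseteq> {..<length lam}"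
    unfolding R_def using part_pos_iff[OF lam] by force
  then have "finite R"
    using finite_subset by blast
  obtain i0 c0 where "(i0, c0) \<in> S"
    using conn unfolding cells_connected_def S_def by auto
  then have "i0 \<in> R"
    unfolding S R_def by auto
  then have "R \<noteq> {}"
    by auto
  define p where "p = Min R"
  define g where "g = Max R"
  have "p \<in> R" "g \<in> R" "p \<le> g"
    unfolding p_def g_def using \<open>finite R\<close> \<open>R \<noteq> {}\<close> by auto
  have outside: "part mu i = part lam i" if "i < p \<or> g < i" for i
    using that part_le_if_cells_subset[OF sub, of i] \<open>finite R\<close> Min_le Max_ge
    unfolding p_def g_def R_def
    by (metis (mono_tags) le_neq_implies_less mem_Collect_eq not_le)
  have "part mu i < part lam (Suc i)" if "p \<le> i" "i < g" for i
    using rows_overlap_if_cells_connected[OF S conn[folded S_def], of p _ g] that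
      \<open>p \<in> R\<close> \<open>g \<in> R\<close> unfolding S R_def by auto
  then have "part mu i = part lam (Suc i) - 1" if "p \<le> i" "i < g" for i
    using part_Suc_le_if_no_2x2[OF lam mu no2, of i] that by fastforce
  then have "strip_removed lam mu p g"
    unfolding strip_removed_def using outside \<open>p \<le> g\<close> \<open>g \<in> R\<close> unfolding R_def by auto
  moreover have "g < length lam"
    using \<open>g \<in> R\<close> R_sub by auto
  ultimately show ?thesis
    using that by blast
qed

text \<open>Removing a border strip from rows \<open>p, \<dots>, g\<close> moves the bead of row \<open>p\<close> to the position
  of the new bead of row \<open>g\<close>, the beads of the rows in between shifting up by one row.\<close>

lemma beta_set_strip_removed:
  assumes lam: "is_partition lam" and strip: "strip_removed lam mu p g" and "g < k"
  shows "beta_set k mu = insert (beta_num mu k g) (beta_set k lam - {beta_num lam k p})"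
proof -
  note def = strip_removedD[OF strip]
  define shift where "shift i = (if p \<le> i \<and> i < g then Suc i else i)" for i
  have "beta_num mu k i = beta_num lam k (shift i)" if "i \<noteq> g" for i
    using def(2) def(3)[of i] def(4)[of i] that part_antimono[OF lam, of "Suc i" g] \<open>g < k\<close>
    unfolding beta_num_def shift_def by (cases "p \<le> i \<and> i < g") auto
  then have "beta_num mu k ` ({..<k} - {g}) = beta_num lam k ` shift ` ({..<k} - {g})"
    unfolding image_image by (intro image_cong) auto
  moreover have "shift ` ({..<k} - {g}) = {..<k} - {p}"
  proof (intro set_eqI iffI)
    fix j assume "j \<in> {..<k} - {p}"
    then have "j = shift (if p < j \<and> j \<le> g then j - 1 else j)"
      and "(if p < j \<and> j \<le> g then j - 1 else j) \<in> {..<k} - {g}"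
      using def(1) \<open>g < k\<close> unfolding shift_def by auto
    then show "j \<in> shift ` ({..<k} - {g})"
      by blast
  qed (use def(1) \<open>g < k\<close> in \<open>auto simp: shift_def\<close>)
  moreover have "beta_set k mu = insert (beta_num mu k g) (beta_num mu k ` ({..<k} - {g}))"
    unfolding beta_set_def using \<open>g < k\<close> by blast
  moreover have "beta_num lam k ` ({..<k} - {p}) = beta_set k lam - {beta_num lam k p}"
    unfolding beta_set_def
    using inj_on_image_set_diff[OF inj_on_beta_num[OF lam, of k], of "{..<k}" "{p}"] def(1) \<open>g < k\<close>
    by simp
  ultimately show ?thesis
    by simp
qed

lemma card_strip_removed:
  assumes lam: "is_partition lam" "length lam \<le> k" and mu: "is_partition mu"
    and strip: "strip_removed lam mu p g" and "g < k"
  shows "card (cells lam - cells mu) + beta_num mu k g = beta_num lam k p"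
    and "beta_num mu k g \<notin> beta_set k lam - {beta_num lam k p}"
proof -
  define x where "x = beta_num lam k p"
  define y where "y = beta_num mu k g"
  have beta: "beta_set k mu = insert y (beta_set k lam - {x})"
    unfolding x_def y_def by (rule beta_set_strip_removed[OF lam(1) strip \<open>g < k\<close>])
  have "x \<in> beta_set k lam"
    using strip_removedD(1)[OF strip] \<open>g < k\<close> unfolding x_def y_def beta_set_def by auto
  show y_notin: "y \<notin> beta_set k lam - {x}"
  proof
    assume "y \<in> beta_set k lam - {x}"
    then have "card (beta_set k mu) = k - 1"
      using beta \<open>x \<in> beta_set k lam\<close> card_beta_set[OF lam(1)] finite_beta_set
      by (simp add: insert_absorb)
    then show False
      using card_beta_set[OF mu] \<open>g < k\<close> by simp
  qed
  have "cells mu \<subseteq> cells lam"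
    using remove_rim_hook_if_strip_removed[OF lam(1) mu strip refl]
    unfolding remove_rim_hook_def by blast
  moreover have "\<Sum>(beta_set k mu) = y + \<Sum>(beta_set k lam - {x})"
    using beta y_notin finite_beta_set by simp
  moreover have "\<Sum>(beta_set k lam) = x + \<Sum>(beta_set k lam - {x})"
    using \<open>x \<in> beta_set k lam\<close> finite_beta_set by (simp add: sum.remove)
  ultimately show "card (cells lam - cells mu) + y = x"
    using card_cells_diff[OF lam mu] by linarith
qed

lemma rim_hook_of_gap:
  assumes lam: "is_partition lam" "length lam \<le> k" and "0 < t" "p < k"
    and t_le: "t \<le> beta_num lam k p" and gap: "beta_num lam k p - t \<notin> beta_set k lam"
  shows "\<exists>mu. remove_rim_hook t lam mu \<and>
    beta_set k mu = insert (beta_num lam k p - t) (beta_set k lam - {beta_num lam k p})"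
proof -
  define y where "y = beta_num lam k p - t"
  obtain g where g: "p \<le> g" "g < k" "k - 1 - g \<le> y"
    "y - (k - 1 - g) < part lam g" "part lam (Suc g) \<le> y - (k - 1 - g)"
    using row_above_gap[OF lam \<open>p < k\<close>, of y] assms(3) t_le gap unfolding y_def by auto
  define j where "j = y - (k - 1 - g)"
  \<comment> \<open>rows \<open>p \<le> i < g\<close> drop to one less than the next row, row \<open>g\<close> drops to column \<open>j\<close>\<close>
  define f where "f i = (if i < p \<or> g < i then part lam i else if i < g then part lam (Suc i) - 1 else j)"
    for i
  have "f (Suc i) \<le> f i" for i
    using part_antimono[OF lam(1), of i "Suc i"] part_antimono[OF lam(1), of "Suc i" "Suc (Suc i)"]
      part_antimono[OF lam(1), of "Suc i" g] g(1,4,5)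
    unfolding f_def j_def by (auto simp: not_less)
  then have "antimono f"
    unfolding antimono_iff_le_Suc by blast
  moreover have "f k = 0"
    unfolding f_def using g(2) part_eq_0 lam(2) by simp
  ultimately have mu: "is_partition (partition_of f)" and part_mu: "part (partition_of f) = f"
    using partition_of by blast+
  have strip: "strip_removed lam (partition_of f) p g"
    unfolding strip_removed_def part_mu f_def j_def using g by auto
  have "beta_num (partition_of f) k g = y"
    unfolding beta_num_def part_mu f_def j_def using g by simp
  then have "remove_rim_hook t lam (partition_of f)"
    using card_strip_removed(1)[OF lam mu strip g(2)] t_le
    by (intro remove_rim_hook_if_strip_removed[OF lam(1) mu strip]) (simp add: y_def)
  then show ?thesis
    using beta_set_strip_removed[OF lam(1) strip g(2)] \<open>beta_num (partition_of f) k g = y\<close>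
    unfolding y_def by (intro exI[of _ "partition_of f"]) simp
qed

lemma beta_set_remove_rim_hook:
  assumes lam: "is_partition lam" "length lam \<le> k" and rim: "remove_rim_hook t lam mu"
  obtains x where "x \<in> beta_set k lam" "t \<le> x" "x - t \<notin> beta_set k lam - {x}"
    "beta_set k mu = insert (x - t) (beta_set k lam - {x})"
proof -
  obtain p g where strip: "strip_removed lam mu p g" and "g < length lam"
    using strip_removed_if_remove_rim_hook[OF lam(1) rim] .
  then have "g < k" "p < k"
    using lam(2) strip_removedD(1)[OF strip] by auto
  have mu: "is_partition mu" and "card (cells lam - cells mu) = t"
    using rim unfolding remove_rim_hook_def by auto
  then have "t + beta_num mu k g = beta_num lam k p"
    using card_strip_removed(1)[OF lam mu strip \<open>g < k\<close>] by simp
  moreover have "beta_num lam k p \<in> beta_set k lam"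
    using \<open>p < k\<close> unfolding beta_set_def by simp
  ultimately show ?thesis
    using that card_strip_removed(2)[OF lam mu strip \<open>g < k\<close>]
      beta_set_strip_removed[OF lam(1) strip \<open>g < k\<close>]
    by (metis add_diff_cancel_left' le_add1)
qed

section \<open>Runner counts\<close>

text \<open>On an abacus with \<open>t\<close> runners, position \<open>x\<close> lies on runner \<open>x mod t\<close> at level \<open>x div t\<close>;
  \<open>flush_set t c\<close> has \<open>c s\<close> beads pushed to the top of runner \<open>s\<close>.\<close>

definition runner_count :: "nat \<Rightarrow> nat \<Rightarrow> nat set \<Rightarrow> nat" where
  "runner_count t s B = card {x \<in> B. x mod t = s}"

definition flush_set :: "nat \<Rightarrow> (nat \<Rightarrow> nat) \<Rightarrow> nat set" where
  "flush_set t c = {x. x div t < c (x mod t)}"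

lemma runner_count_move:
  assumes "finite B" "x \<in> B" "y \<notin> B - {x}" "y mod t = x mod t"
  shows "runner_count t s (insert y (B - {x})) = runner_count t s B"
proof (cases "x mod t = s")
  case True
  have "{z \<in> insert y (B - {x}). z mod t = s} = insert y {z \<in> B - {x}. z mod t = s}"
    and "{z \<in> B. z mod t = s} = insert x {z \<in> B - {x}. z mod t = s}"
    using True assms(2,4) by auto
  then show ?thesis
    unfolding runner_count_def using assms(1,3) by simp
next
  case False
  then have "{z \<in> insert y (B - {x}). z mod t = s} = {z \<in> B. z mod t = s}"
    using assms(4) by auto
  then show ?thesis
    unfolding runner_count_def by simp
qed

lemma sub_closed_diff_mult:
  assumes "sub_closed t B" "x \<in> B" "t * n \<le> x"
  shows "x - t * n \<in> B"
  using assms(3)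
proof (induction n)
  case (Suc n)
  then have "x - t * n \<in> B" "t \<le> x - t * n"
    by auto
  then have "x - t * n - t \<in> B"
    using assms(1) unfolding sub_closed_def by blast
  then show ?case
    by (simp add: add.commute)
qed (use assms(2) in simp)

lemma down_closed_eq_lessThan:
  assumes "finite J" and "\<And>j i. j \<in> J \<Longrightarrow> i \<le> j \<Longrightarrow> i \<in> J"
  shows "J = {..<card J}"
proof -
  have "J \<subseteq> {..<card J}"
  proof
    fix j assume "j \<in> J"
    then have "{..j} \<subseteq> J"
      using assms(2) by auto
    then have "card {..j} \<le> card J"
      using card_mono[OF assms(1)] by blast
    then show "j \<in> {..<card J}"
      by simp
  qed
  then show ?thesis
    using card_subset_eq[of "{..<card J}" J] by simp
qed

lemma flush_set_runner_count:
  assumes "0 < t" "sub_closed t B" "finite B"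
  shows "B = flush_set t (\<lambda>s. runner_count t s B)"
proof (intro set_eqI)
  fix x
  define s where "s = x mod t"
  define J where "J = {j. s + t * j \<in> B}"
  have "bij_betw (\<lambda>j. s + t * j) J {z \<in> B. z mod t = s}"
  proof (rule bij_betwI')
    fix z assume "z \<in> {z \<in> B. z mod t = s}"
    then have "z div t \<in> J" "z = s + t * (z div t)"
      unfolding J_def by (auto simp: mod_mult_div_eq)
    then show "\<exists>j\<in>J. z = s + t * j"
      by blast
  qed (use \<open>0 < t\<close> in \<open>auto simp: J_def s_def\<close>)
  then have "runner_count t s B = card J" "finite J"
    unfolding runner_count_def using bij_betw_same_card bij_betw_finite assms(3) by fastforce+
  moreover have "J = {..<card J}"
  proof (rule down_closed_eq_lessThan[OF \<open>finite J\<close>])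
    fix j i assume "j \<in> J" "i \<le> j"
    have "t * (j - i) \<le> s + t * j"
      by (metis diff_le_self mult_le_mono2 trans_le_add2)
    then have "s + t * j - t * (j - i) \<in> B"
      using sub_closed_diff_mult[OF assms(2)] \<open>j \<in> J\<close> unfolding J_def by blast
    moreover have "s + t * j - t * (j - i) = s + t * i"
      using \<open>i \<le> j\<close> by (simp add: diff_mult_distrib2)
    ultimately show "i \<in> J"
      unfolding J_def by simp
  qed
  moreover have "x \<in> B \<longleftrightarrow> x div t \<in> J"
    unfolding J_def s_def by (simp add: mod_mult_div_eq)
  ultimately show "x \<in> B \<longleftrightarrow> x \<in> flush_set t (\<lambda>s. runner_count t s B)"
    unfolding flush_set_def s_def by (metis lessThan_iff mem_Collect_eq)
qed

lemma sub_closed_flush_set: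
  assumes "0 < t"
  shows "sub_closed t (flush_set t c)"
  unfolding sub_closed_def flush_set_def
  using assms by (auto simp: le_mod_geq le_div_geq)

lemma flush_set_eq_UN:
  assumes "0 < t"
  shows "flush_set t c = (\<Union>s<t. (\<lambda>j. s + t * j) ` {..<c s})"
proof (intro set_eqI iffI)
  fix x assume "x \<in> flush_set t c"
  then have "x div t < c (x mod t)" "x = x mod t + t * (x div t)" "x mod t < t"
    unfolding flush_set_def using assms by auto
  then show "x \<in> (\<Union>s<t. (\<lambda>j. s + t * j) ` {..<c s})"
    by blast
qed (auto simp: flush_set_def)

lemma finite_flush_set: "0 < t \<Longrightarrow> finite (flush_set t c)"
  using flush_set_eq_UN by simp

lemma runner_count_flush_set:
  assumes "0 < t" "s < t"
  shows "runner_count t s (flush_set t c) = c s"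
proof -
  have "{x \<in> flush_set t c. x mod t = s} = (\<lambda>j. s + t * j) ` {..<c s}"
    using assms flush_set_eq_UN[OF assms(1), of c] by (auto simp: flush_set_def)
  moreover have "inj_on (\<lambda>j. s + t * j) {..<c s}"
    using assms(1) unfolding inj_on_def by auto
  ultimately show ?thesis
    unfolding runner_count_def by (simp add: card_image)
qed

lemma flush_set_cong:
  assumes "\<And>s. s < t \<Longrightarrow> c s = c' s" "0 < t"
  shows "flush_set t c = flush_set t c'"
  unfolding flush_set_def using assms by auto

lemma card_eq_sum_runner_count:
  assumes "0 < t" "finite B"
  shows "card B = (\<Sum>s<t. runner_count t s B)"
proof -
  have "B = (\<Union>s<t. {x \<in> B. x mod t = s})"
    using assms(1) by auto
  then have "card B = card (\<Union>s<t. {x \<in> B. x mod t = s})"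
    by simp
  also have "\<dots> = (\<Sum>s<t. runner_count t s B)"
    unfolding runner_count_def by (rule card_UN_disjoint) (use assms(2) in auto)
  finally show ?thesis .
qed

lemma runner_count_refine:
  assumes "0 < b" "0 < q" "finite B" "r < b"
  shows "runner_count b r B = (\<Sum>j<q. runner_count (q * b) (r + b * j) B)"
proof -
  have "{x \<in> B. x mod b = r} = (\<Union>j<q. {x \<in> B. x mod (q * b) = r + b * j})"
  proof (intro set_eqI iffI)
    fix x assume x: "x \<in> {x \<in> B. x mod b = r}"
    define s where "s = x mod (q * b)"
    have "s mod b = r"
      unfolding s_def using x by (simp add: mod_mod_cancel)
    then have "s = r + b * (s div b)"
      by (metis add.commute mult.commute div_mult_mod_eq)
    moreover have "s div b < q"
      unfolding s_def using assms(1,2)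
      by (metis div_eq_0_iff less_mult_imp_div_less mod_less_divisor mult_pos_pos not_gr_zero mult.commute)
    ultimately show "x \<in> (\<Union>j<q. {x \<in> B. x mod (q * b) = r + b * j})"
      using x unfolding s_def by auto
  next
    fix x assume "x \<in> (\<Union>j<q. {x \<in> B. x mod (q * b) = r + b * j})"
    moreover have "x mod b = (x mod (q * b)) mod b"
      by (simp add: mod_mod_cancel)
    ultimately show "x \<in> {x \<in> B. x mod b = r}"
      using assms(4) by auto
  qed
  moreover have "card (\<Union>j<q. {x \<in> B. x mod (q * b) = r + b * j}) =
      (\<Sum>j<q. card {x \<in> B. x mod (q * b) = r + b * j})"
    by (rule card_UN_disjoint) (use assms(1,3) in auto)
  ultimately show ?thesis
    unfolding runner_count_def by simp
qed

section \<open>Cores via runner counts\<close>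

lemma runner_count_rim_hook_removals:
  assumes "(remove_rim_hook t)\<^sup>*\<^sup>* lam mu" "is_partition lam" "length lam \<le> k"
  shows "is_partition mu \<and> length mu \<le> k \<and>
    (\<forall>s. runner_count t s (beta_set k mu) = runner_count t s (beta_set k lam))"
  using assms(1)
proof (induction rule: rtranclp_induct)
  case (step mu mu')
  then have mu: "is_partition mu" "length mu \<le> k"
    by auto
  have "is_partition mu'" "cells mu' \<subseteq> cells mu"
    using step(2) unfolding remove_rim_hook_def by auto
  moreover obtain x where "x \<in> beta_set k mu" "t \<le> x" "x - t \<notin> beta_set k mu - {x}"
    "beta_set k mu' = insert (x - t) (beta_set k mu - {x})"
    using beta_set_remove_rim_hook[OF mu step(2)] .
  moreover have "(x - t) mod t = x mod t"
    using \<open>t \<le> x\<close> by (simp add: le_mod_geq)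
  ultimately show ?case
    using step.IH runner_count_move[OF finite_beta_set] length_le_if_cells_subset[OF mu(1)] mu(2)
    by (metis order.trans)
qed (use assms in simp)

lemma ex_core:
  assumes "0 < t" "is_partition lam"
  shows "\<exists>mu. (remove_rim_hook t)\<^sup>*\<^sup>* lam mu \<and> is_core t mu"
  using assms(2)
proof (induction "card (cells lam)" arbitrary: lam rule: less_induct)
  case less
  show ?case
  proof (cases "is_core t lam")
    case False
    then obtain x where "x \<in> beta_set (length lam) lam" "t \<le> x" "x - t \<notin> beta_set (length lam) lam"
      using is_core_iff_sub_closed[OF less.prems order.refl assms(1)] unfolding sub_closed_def by blast
    then obtain mu' where mu': "remove_rim_hook t lam mu'"
      using rim_hook_of_gap[OF less.prems order.refl assms(1)] unfolding beta_set_def by blast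
    then have "is_partition mu'" "cells mu' \<subseteq> cells lam" "card (cells lam - cells mu') = t"
      unfolding remove_rim_hook_def by auto
    then have "cells mu' \<subset> cells lam"
      using assms(1) by auto
    then have "card (cells mu') < card (cells lam)"
      by (rule psubset_card_mono[OF finite_cells])
    then obtain mu where "(remove_rim_hook t)\<^sup>*\<^sup>* mu' mu" "is_core t mu"
      using less.hyps \<open>is_partition mu'\<close> by blast
    then show ?thesis
      using converse_rtranclp_into_rtranclp[of "remove_rim_hook t", OF mu'] by blast
  qed blast
qed

text \<open>Rim hook removals keep runner counts, and a core has a flush beta-set, so the
  beta-set of the core is determined; this also shows that \<open>core\<close> is well defined.\<close>

lemma beta_set_core:
  assumes "0 < t" "is_partition lam" "length lam \<le> k"
  shows "is_partition (core t lam)" "length (core t lam) \<le> k"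
    and "beta_set k (core t lam) = flush_set t (\<lambda>s. runner_count t s (beta_set k lam))"
proof -
  have flush: "is_partition mu \<and> length mu \<le> k \<and>
      beta_set k mu = flush_set t (\<lambda>s. runner_count t s (beta_set k lam))"
    if "(remove_rim_hook t)\<^sup>*\<^sup>* lam mu" "is_core t mu" for mu
  proof -
    have mu: "is_partition mu" "length mu \<le> k"
      and counts: "\<And>s. runner_count t s (beta_set k mu) = runner_count t s (beta_set k lam)"
      using runner_count_rim_hook_removals[OF that(1) assms(2,3)] by auto
    have "sub_closed t (beta_set k mu)"
      using is_core_iff_sub_closed[OF mu assms(1)] that(2) by simp
    then have "beta_set k mu = flush_set t (\<lambda>s. runner_count t s (beta_set k mu))"
      using flush_set_runner_count[OF assms(1) _ finite_beta_set] by blast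
    then show ?thesis
      using mu counts by simp
  qed
  obtain mu0 where mu0: "(remove_rim_hook t)\<^sup>*\<^sup>* lam mu0" "is_core t mu0"
    using ex_core[OF assms(1,2)] by blast
  have "core t lam = mu0"
    unfolding core_def
  proof (rule the_equality)
    fix mu assume "(remove_rim_hook t)\<^sup>*\<^sup>* lam mu \<and> is_core t mu"
    then show "mu = mu0"
      using flush[of mu] flush[OF mu0] beta_set_inj by metis
  qed (use mu0 in blast)
  then show "is_partition (core t lam)" "length (core t lam) \<le> k"
    "beta_set k (core t lam) = flush_set t (\<lambda>s. runner_count t s (beta_set k lam))"
    using flush[OF mu0] by simp_all
qed

lemma core_eq_iff_runner_count:
  assumes "0 < b" "is_partition lam" "length lam \<le> k"
    and sigma: "is_partition sigma" "is_core b sigma" "length sigma \<le> k"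
  shows "core b lam = sigma \<longleftrightarrow>
    (\<forall>r<b. runner_count b r (beta_set k lam) = runner_count b r (beta_set k sigma))"
proof
  assume "core b lam = sigma"
  then show "\<forall>r<b. runner_count b r (beta_set k lam) = runner_count b r (beta_set k sigma)"
    using beta_set_core(3)[OF assms(1-3)] runner_count_flush_set[OF assms(1)] by simp
next
  assume counts: "\<forall>r<b. runner_count b r (beta_set k lam) = runner_count b r (beta_set k sigma)"
  have "sub_closed b (beta_set k sigma)"
    using is_core_iff_sub_closed[OF sigma(1,3) assms(1)] sigma(2) by simp
  then have "beta_set k sigma = flush_set b (\<lambda>s. runner_count b s (beta_set k sigma))"
    using flush_set_runner_count[OF assms(1) _ finite_beta_set] by blast
  also have "\<dots> = flush_set b (\<lambda>s. runner_count b s (beta_set k lam))"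
    by (rule flush_set_cong) (use counts assms(1) in auto)
  also have "\<dots> = beta_set k (core b lam)"
    using beta_set_core(3)[OF assms(1-3)] by simp
  finally show "core b lam = sigma"
    using beta_set_inj[OF beta_set_core(1)[OF assms(1-3)] sigma(1) beta_set_core(2)[OF assms(1-3)]
        sigma(3)] by simp
qed

section \<open>Counting \<open>a\<close>-cores with a given \<open>b\<close>-core\<close>

lemma is_core_eq_if_runner_count_eq:
  assumes "0 < t" and lam: "is_partition lam" "is_core t lam" "length lam \<le> k"
    and mu: "is_partition mu" "is_core t mu" "length mu \<le> k"
    and "\<And>s. s < t \<Longrightarrow> runner_count t s (beta_set k lam) = runner_count t s (beta_set k mu)"
  shows "lam = mu"
proof -
  have "sub_closed t (beta_set k lam)" "sub_closed t (beta_set k mu)"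
    using is_core_iff_sub_closed[OF lam(1,3) assms(1)] is_core_iff_sub_closed[OF mu(1,3) assms(1)]
      lam(2) mu(2) by simp_all
  then have "beta_set k lam = flush_set t (\<lambda>s. runner_count t s (beta_set k lam))"
    "beta_set k mu = flush_set t (\<lambda>s. runner_count t s (beta_set k mu))"
    using flush_set_runner_count[OF \<open>0 < t\<close> _ finite_beta_set] by blast+
  moreover have "flush_set t (\<lambda>s. runner_count t s (beta_set k lam)) =
      flush_set t (\<lambda>s. runner_count t s (beta_set k mu))"
    by (rule flush_set_cong) (use assms(1,8) in auto)
  ultimately show ?thesis
    using beta_set_inj[OF lam(1) mu(1) lam(3) mu(3)] by simp
qed

lemma ex_core_with_runner_count:
  assumes "0 < t" "(\<Sum>s<t. c s) = k"
  shows "\<exists>lam. is_partition lam \<and> is_core t lam \<and> length lam \<le> k \<and>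
    (\<forall>s<t. runner_count t s (beta_set k lam) = c s)"
proof -
  have "(\<Sum>s<t. runner_count t s (flush_set t c)) = (\<Sum>s<t. c s)"
    using runner_count_flush_set[OF assms(1)] by (intro sum.cong) auto
  then have "card (flush_set t c) = k"
    using card_eq_sum_runner_count[OF assms(1) finite_flush_set[OF assms(1)]] assms(2) by simp
  then obtain lam where lam: "is_partition lam" "length lam \<le> k" "beta_set k lam = flush_set t c"
    using beta_set_surj[OF finite_flush_set[OF assms(1)]] by blast
  then have "is_core t lam"
    using is_core_iff_sub_closed[OF lam(1,2) assms(1)] sub_closed_flush_set[OF assms(1)] by simp
  then show ?thesis
    using lam runner_count_flush_set[OF assms(1)] by auto
qed

lemma core_eq_iff_refined_runner_count:
  assumes "0 < b" "0 < q" "is_partition lam" "length lam \<le> k"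
    and "is_partition sigma" "is_core b sigma" "length sigma \<le> k"
  shows "core b lam = sigma \<longleftrightarrow>
    (\<forall>r<b. (\<Sum>j<q. runner_count (q * b) (r + b * j) (beta_set k lam)) =
      runner_count b r (beta_set k sigma))"
proof -
  have "runner_count b r (beta_set k lam) =
      (\<Sum>j<q. runner_count (q * b) (r + b * j) (beta_set k lam))" if "r < b" for r
    using runner_count_refine[OF assms(1,2) finite_beta_set that] .
  then show ?thesis
    unfolding core_eq_iff_runner_count[OF assms(1,3-7)] by (metis (no_types, lifting))
qed

lemma runner_index_less:
  fixes r b j q :: nat
  assumes "r < b" "j < q"
  shows "r + b * j < q * b"
proof -
  have "r + b * j < b * Suc j"
    using assms(1) by simp
  also have "\<dots> \<le> b * q"
    using assms(2) by (intro mult_le_mono2) simp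
  finally show ?thesis
    by (simp add: mult.commute)
qed

lemma bij_betw_runner_index:
  fixes b q :: nat
  shows "bij_betw (\<lambda>(r, j). r + b * j) ({..<b} \<times> {..<q}) {..<q * b}"
proof (rule bij_betwI')
  have digits: "r = (r + b * j) mod b" "j = (r + b * j) div b" if "r < b" for r j
    using that by auto
  show "((\<lambda>(r, j). r + b * j) x = (\<lambda>(r, j). r + b * j) y) = (x = y)"
    if x: "x \<in> {..<b} \<times> {..<q}" and y: "y \<in> {..<b} \<times> {..<q}" for x y
  proof -
    obtain r j r' j' where "x = (r, j)" "y = (r', j')" "r < b" "r' < b"
      using x y by auto
    moreover have "r = r' \<and> j = j'" if "r + b * j = r' + b * j'"
      using digits[of r j] digits[of r' j'] \<open>r < b\<close> \<open>r' < b\<close> that by metis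
    ultimately show ?thesis
      by auto
  qed
  show "(\<lambda>(r, j). r + b * j) x \<in> {..<q * b}" if "x \<in> {..<b} \<times> {..<q}" for x
    using that runner_index_less by auto
  show "\<exists>x\<in>{..<b} \<times> {..<q}. s = (\<lambda>(r, j). r + b * j) x" if "s \<in> {..<q * b}" for s
  proof -
    have "0 < b"
      using that by (cases b) auto
    then have "s mod b < b" "s div b < q" "s = s mod b + b * (s div b)"
      using that by (auto simp: less_mult_imp_div_less)
    then show ?thesis
      by force
  qed
qed

lemma sum_runner_regroup:
  fixes b q :: nat
  shows "(\<Sum>s<q * b. c s) = (\<Sum>r<b. \<Sum>j<q. c (r + b * j))"
  using sum.reindex_bij_betw[OF bij_betw_runner_index, of c]
  by (simp add: sum.cartesian_product case_prod_beta)

lemma bij_betw_cores_runner_counts: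
  assumes "0 < b" "0 < q"
    and sigma: "is_partition sigma" "is_core b sigma" "length sigma \<le> k"
  shows "bij_betw (\<lambda>lam. \<lambda>s\<in>{..<q * b}. runner_count (q * b) s (beta_set k lam))
    {lam. is_partition lam \<and> is_core (q * b) lam \<and> core b lam = sigma \<and> length lam \<le> k}
    {c \<in> {..<q * b} \<rightarrow>\<^sub>E UNIV. \<forall>r<b. (\<Sum>j<q. c (r + b * j)) = runner_count b r (beta_set k sigma)}"
    (is "bij_betw ?f ?L ?T")
proof (rule bij_betw_imageI)
  have "0 < q * b"
    using assms(1,2) by simp
  show "inj_on ?f ?L"
  proof (rule inj_onI)
    fix lam mu assume "lam \<in> ?L" "mu \<in> ?L" and eq: "?f lam = ?f mu"
    have "runner_count (q * b) s (beta_set k lam) = runner_count (q * b) s (beta_set k mu)"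
      if "s < q * b" for s
      using fun_cong[OF eq, of s] that by simp
    then show "lam = mu"
      using is_core_eq_if_runner_count_eq[OF \<open>0 < q * b\<close>] \<open>lam \<in> ?L\<close> \<open>mu \<in> ?L\<close> by blast
  qed
  have sum_f: "(\<Sum>j<q. ?f lam (r + b * j)) = (\<Sum>j<q. runner_count (q * b) (r + b * j) (beta_set k lam))"
    if "r < b" for lam r
    using runner_index_less[OF that] by simp
  show "?f ` ?L = ?T"
  proof (intro set_eqI iffI)
    fix c assume "c \<in> ?f ` ?L"
    then obtain lam where lam: "lam \<in> ?L" "c = ?f lam"
      by blast
    then have "\<forall>r<b. (\<Sum>j<q. runner_count (q * b) (r + b * j) (beta_set k lam)) =
        runner_count b r (beta_set k sigma)"
      using core_eq_iff_refined_runner_count[OF assms(1,2) _ _ sigma] by blast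
    then show "c \<in> ?T"
      using sum_f lam(2) by simp
  next
    fix c assume c: "c \<in> ?T"
    have "(\<Sum>s<q * b. c s) = (\<Sum>r<b. runner_count b r (beta_set k sigma))"
      using c unfolding sum_runner_regroup by simp
    also have "\<dots> = k"
      using card_eq_sum_runner_count[OF assms(1) finite_beta_set] card_beta_set[OF sigma(1)] by simp
    finally obtain lam where lam: "is_partition lam" "is_core (q * b) lam" "length lam \<le> k"
      "\<And>s. s < q * b \<Longrightarrow> runner_count (q * b) s (beta_set k lam) = c s"
      using ex_core_with_runner_count[OF \<open>0 < q * b\<close>] by blast
    have "core b lam = sigma"
      using core_eq_iff_refined_runner_count[OF assms(1,2) lam(1,3) sigma] c lam(4) runner_index_less
      by simp
    moreover have "?f lam = c"
      using lam(4) c by (auto simp: PiE_def extensional_def)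
    ultimately show "c \<in> ?f ` ?L"
      using lam by blast
  qed
qed

definition compositions :: "nat \<Rightarrow> nat \<Rightarrow> (nat \<Rightarrow> nat) set" where
  "compositions q n = {v \<in> {..<q} \<rightarrow>\<^sub>E UNIV. sum v {..<q} = n}"

lemma card_compositions:
  assumes "0 < q"
  shows "card (compositions q n) = (n + q - 1) choose (q - 1)"
proof -
  have "bij_betw (\<lambda>v. map v [0..<q]) (compositions q n) {xs. length xs = q \<and> sum_list xs = n}"
  proof (rule bij_betwI[where g = "\<lambda>xs. \<lambda>j\<in>{..<q}. xs ! j"])
    show "(\<lambda>v. map v [0..<q]) \<in> compositions q n \<rightarrow> {xs. length xs = q \<and> sum_list xs = n}"
      unfolding compositions_def by (auto simp: sum_list_sum_nth atLeast0LessThan)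
    show "(\<lambda>xs. \<lambda>j\<in>{..<q}. xs ! j) \<in> {xs. length xs = q \<and> sum_list xs = n} \<rightarrow> compositions q n"
    proof
      fix xs assume "xs \<in> {xs. length xs = q \<and> sum_list xs = n}"
      moreover have "sum (\<lambda>j\<in>{..<q}. xs ! j) {..<q} = sum ((!) xs) {..<q}"
        by (rule sum.cong) auto
      ultimately show "(\<lambda>j\<in>{..<q}. xs ! j) \<in> compositions q n"
        unfolding compositions_def by (auto simp: sum_list_sum_nth atLeast0LessThan)
    qed
    show "(\<lambda>j\<in>{..<q}. map v [0..<q] ! j) = v" if "v \<in> compositions q n" for v
      using that unfolding compositions_def by (auto simp: PiE_def extensional_def)
    show "map (\<lambda>j\<in>{..<q}. xs ! j) [0..<q] = xs" if "xs \<in> {xs. length xs = q \<and> sum_list xs = n}" for xs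
      using that by (auto intro: nth_equalityI)
  qed
  then have "card (compositions q n) = (n + q - 1) choose n"
    using bij_betw_same_card card_length_sum_list by fastforce
  also have "\<dots> = (n + q - 1) choose (q - 1)"
    using binomial_symmetric[of n "n + q - 1"] assms by simp
  finally show ?thesis .
qed

text \<open>Reading a \<open>q * b\<close>-abacus as \<open>b\<close> groups of \<open>q\<close> runners.\<close>

lemma card_runner_sums:
  assumes "0 < b"
  shows "card {c \<in> {..<q * b} \<rightarrow>\<^sub>E UNIV. \<forall>r<b. (\<Sum>j<q. c (r + b * j)) = d r} =
    (\<Prod>r<b. card (compositions q (d r)))"
proof -
  let ?regroup = "\<lambda>c. \<lambda>r\<in>{..<b}. \<lambda>j\<in>{..<q}. c (r + b * j)"
  have "bij_betw ?regroup {c \<in> {..<q * b} \<rightarrow>\<^sub>E UNIV. \<forall>r<b. (\<Sum>j<q. c (r + b * j)) = d r}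
      (\<Pi>\<^sub>E r\<in>{..<b}. compositions q (d r))"
  proof (rule bij_betwI[where g = "\<lambda>w. \<lambda>s\<in>{..<q * b}. w (s mod b) (s div b)"])
    show "?regroup \<in> {c \<in> {..<q * b} \<rightarrow>\<^sub>E UNIV. \<forall>r<b. (\<Sum>j<q. c (r + b * j)) = d r} \<rightarrow>
        (\<Pi>\<^sub>E r\<in>{..<b}. compositions q (d r))"
      unfolding compositions_def by auto
    have "(\<Sum>j<q. w (((r + b * j)) mod b) ((r + b * j) div b)) = d r"
      if "w \<in> (\<Pi>\<^sub>E r\<in>{..<b}. compositions q (d r))" "r < b" for w r
      using that unfolding compositions_def by auto
    then show "(\<lambda>w. \<lambda>s\<in>{..<q * b}. w (s mod b) (s div b)) \<in> (\<Pi>\<^sub>E r\<in>{..<b}. compositions q (d r)) \<rightarrow>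
        {c \<in> {..<q * b} \<rightarrow>\<^sub>E UNIV. \<forall>r<b. (\<Sum>j<q. c (r + b * j)) = d r}"
      using runner_index_less by (auto intro!: sum.cong)
    show "(\<lambda>s\<in>{..<q * b}. ?regroup c (s mod b) (s div b)) = c"
      if "c \<in> {c \<in> {..<q * b} \<rightarrow>\<^sub>E UNIV. \<forall>r<b. (\<Sum>j<q. c (r + b * j)) = d r}" for c
    proof
      fix s
      show "(\<lambda>s\<in>{..<q * b}. ?regroup c (s mod b) (s div b)) s = c s"
        using that assms by (cases "s < q * b") (auto simp: less_mult_imp_div_less PiE_def
          extensional_def mult.commute)
    qed
    show "?regroup (\<lambda>s\<in>{..<q * b}. w (s mod b) (s div b)) = w"
      if "w \<in> (\<Pi>\<^sub>E r\<in>{..<b}. compositions q (d r))" for w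
    proof (intro ext)
      fix r j
      show "?regroup (\<lambda>s\<in>{..<q * b}. w (s mod b) (s div b)) r j = w r j"
      proof (cases "r < b")
        case True
        then have "w r \<in> compositions q (d r)"
          using that by auto
        then show ?thesis
          using True runner_index_less[OF True, of j q]
          by (cases "j < q") (auto simp: compositions_def PiE_def extensional_def)
      qed (use that in \<open>auto simp: PiE_def extensional_def\<close>)
    qed
  qed
  then show ?thesis
    by (simp add: bij_betw_same_card card_PiE)
qed

lemma N_sigma_eq_prod_binomial:
  assumes "0 < b" "0 < q"
    and "is_partition sigma" "is_core b sigma" "length sigma \<le> k"
  shows "N_sigma (q * b) b sigma k =
    (\<Prod>r<b. (runner_count b r (beta_set k sigma) + q - 1) choose (q - 1))"
  unfolding N_sigma_def
  using bij_betw_same_card[OF bij_betw_cores_runner_counts[OF assms]] card_runner_sums[OF assms(1)]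
    card_compositions[OF assms(2)] by simp

section \<open>Quasipolynomiality\<close>

lemma beta_set_add:
  assumes "is_partition sigma" "length sigma \<le> k"
  shows "beta_set (k + b) sigma = (\<lambda>x. x + b) ` beta_set k sigma \<union> {..<b}"
proof (intro set_eqI iffI)
  fix x assume "x \<in> beta_set (k + b) sigma"
  then obtain i where i: "i < k + b" "x = beta_num sigma (k + b) i"
    unfolding beta_set_def by auto
  show "x \<in> (\<lambda>x. x + b) ` beta_set k sigma \<union> {..<b}"
  proof (cases "i < k")
    case True
    then have "x = beta_num sigma k i + b"
      using i unfolding beta_num_def by simp
    then show ?thesis
      using True unfolding beta_set_def by auto
  next
    case False
    then have "x < b"
      using i assms(2) part_eq_0[of sigma i] unfolding beta_num_def by simp
    then show ?thesis
      by simp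
  qed
next
  fix x assume "x \<in> (\<lambda>x. x + b) ` beta_set k sigma \<union> {..<b}"
  then consider i where "i < k" "x = beta_num sigma k i + b" | "x < b"
    unfolding beta_set_def by auto
  then show "x \<in> beta_set (k + b) sigma"
  proof cases
    case 1
    then have "x = beta_num sigma (k + b) i"
      unfolding beta_num_def by simp
    then show ?thesis
      using 1 unfolding beta_set_def by auto
  next
    case 2
    \<comment> \<open>the new beads below \<open>b\<close> come from the \<open>b\<close> added zero parts\<close>
    define i where "i = k + b - 1 - x"
    have "part sigma i = 0"
      using assms(2) part_eq_0[of sigma i] 2 unfolding i_def by simp
    then have "x = beta_num sigma (k + b) i" "i < k + b"
      using 2 unfolding beta_num_def i_def by simp_all
    then show ?thesis
      unfolding beta_set_def by auto
  qed
qed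

lemma runner_count_beta_set_add_mult:
  assumes "is_partition sigma" "length sigma \<le> k" "r < b"
  shows "runner_count b r (beta_set (k + b * n) sigma) = runner_count b r (beta_set k sigma) + n"
proof (induction n)
  case (Suc n)
  define k' where "k' = k + b * n"
  have "length sigma \<le> k'"
    using assms(2) unfolding k'_def by simp
  have "{x \<in> beta_set (k' + b) sigma. x mod b = r} =
      insert r ((\<lambda>x. x + b) ` {x \<in> beta_set k' sigma. x mod b = r})"
    unfolding beta_set_add[OF assms(1) \<open>length sigma \<le> k'\<close>] using assms(3) by (auto simp: image_iff)
  moreover have "r \<notin> (\<lambda>x. x + b) ` {x \<in> beta_set k' sigma. x mod b = r}"
    using assms(3) by auto
  ultimately have "runner_count b r (beta_set (k' + b) sigma) = runner_count b r (beta_set k' sigma) + 1"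
    unfolding runner_count_def using finite_beta_set by (simp add: card_image)
  then show ?case
    using Suc unfolding k'_def by (simp add: algebra_simps)
qed simp

definition runner_offset :: "nat \<Rightarrow> nat list \<Rightarrow> nat \<Rightarrow> nat \<Rightarrow> int" where
  "runner_offset b sigma i r =
     int (runner_count b r (beta_set (i + b * length sigma) sigma)) - int (length sigma)"

text \<open>Each runner count grows by one when \<open>k\<close> grows by \<open>b\<close>; the reference point
  \<open>i + b * length sigma\<close> of \<open>runner_offset\<close> is always at least \<open>length sigma\<close>.\<close>

lemma runner_count_beta_set_eq:
  assumes "is_partition sigma" "length sigma \<le> k" "r < b"
  shows "int (runner_count b r (beta_set k sigma)) = runner_offset b sigma (k mod b) r + int (k div b)"
proof -
  define L i n where "L = length sigma" and "i = k mod b" and "n = k div b"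
  have k: "k = i + b * n"
    unfolding i_def n_def by simp
  have "length sigma \<le> i + b * L"
    using assms(3) unfolding L_def by (cases b) auto
  show ?thesis
  proof (cases "L \<le> n")
    case True
    then have "k = (i + b * L) + b * (n - L)"
      using k by (simp add: diff_mult_distrib2)
    then have "runner_count b r (beta_set k sigma) =
        runner_count b r (beta_set (i + b * L) sigma) + (n - L)"
      using runner_count_beta_set_add_mult[OF assms(1) \<open>length sigma \<le> i + b * L\<close> assms(3)]
      by simp
    then show ?thesis
      using True unfolding runner_offset_def L_def i_def n_def by simp
  next
    case False
    then have "i + b * L = k + b * (L - n)"
      using k by (simp add: diff_mult_distrib2)
    then have "runner_count b r (beta_set (i + b * L) sigma) =
        runner_count b r (beta_set k sigma) + (L - n)"
      using runner_count_beta_set_add_mult[OF assms(1,2,3)] by simp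
    then show ?thesis
      using False unfolding runner_offset_def L_def i_def n_def by simp
  qed
qed

definition binomial_poly :: "nat \<Rightarrow> rat poly" where
  "binomial_poly p = smult (1 / fact p) (\<Prod>i<p. [:of_nat i + 1, 1:])"

lemma degree_binomial_poly: "degree (binomial_poly p) = p"
  unfolding binomial_poly_def by (simp add: degree_prod_eq_sum_degree)

lemma lead_coeff_binomial_poly: "lead_coeff (binomial_poly p) = 1 / fact p"
  unfolding binomial_poly_def lead_coeff_smult by (simp add: lead_coeff_prod)

lemma poly_binomial_poly: "poly (binomial_poly p) (of_nat d) = of_nat ((d + p) choose p)"
proof -
  have "(of_nat ((d + p) choose p) :: rat) = pochhammer (of_nat d + 1) p / fact p"
    by (simp add: binomial_gbinomial gbinomial_pochhammer')
  then show ?thesis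
    unfolding binomial_poly_def by (simp add: poly_prod pochhammer_prod atLeast0LessThan add_ac)
qed

lemma quasipoly_deg_lead_prod_shifted:
  fixes P :: "rat poly" and D :: "nat \<Rightarrow> nat \<Rightarrow> rat"
  assumes "P \<noteq> 0"
  shows "quasipoly_deg_lead (\<lambda>k. \<Prod>r<m. poly P (D (k mod p) r + of_nat (k div p)))
    p (m * degree P) (lead_coeff P ^ m)"
  unfolding quasipoly_deg_lead_def
proof (intro allI impI)
  fix i assume "i < p"
  define R where "R = (\<Prod>r<m. pcompose P [:D i r, 1:])"
  have lead: "lead_coeff (pcompose P [:D i r, 1:]) = lead_coeff P" for r
    by (simp add: lead_coeff_comp)
  then have "pcompose P [:D i r, 1:] \<noteq> 0" for r
    using assms by (metis leading_coeff_0_iff)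
  then have "degree R = m * degree P"
    unfolding R_def by (simp add: degree_prod_eq_sum_degree degree_pcompose)
  moreover have "lead_coeff R = lead_coeff P ^ m"
    unfolding R_def by (simp add: lead_coeff_prod lead)
  moreover have "(\<Prod>r<m. poly P (D ((i + n * p) mod p) r + of_nat ((i + n * p) div p))) =
      poly R (of_nat n)" for n
    unfolding R_def using \<open>i < p\<close> by (simp add: poly_prod poly_pcompose add_ac)
  ultimately show "\<exists>P'. degree P' = m * degree P \<and> lead_coeff P' = lead_coeff P ^ m \<and>
      (\<forall>n. (\<Prod>r<m. poly P (D ((i + n * p) mod p) r + of_nat ((i + n * p) div p))) =
        poly P' (of_nat n))"
    by blast
qed

lemma N_sigma_eq_prod_binomial_poly:
  assumes "0 < b" "0 < q" "is_partition sigma" "is_core b sigma" "length sigma \<le> k"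
  shows "of_nat (N_sigma (q * b) b sigma k) = (\<Prod>r<b.
    poly (binomial_poly (q - 1)) (of_int (runner_offset b sigma (k mod b) r) + of_nat (k div b)))"
proof -
  have "of_nat ((runner_count b r (beta_set k sigma) + q - 1) choose (q - 1)) =
      poly (binomial_poly (q - 1)) (of_int (runner_offset b sigma (k mod b) r) + of_nat (k div b))"
    if "r < b" for r
  proof -
    have "(of_nat (runner_count b r (beta_set k sigma)) :: rat) =
        of_int (runner_offset b sigma (k mod b) r) + of_nat (k div b)"
      using runner_count_beta_set_eq[OF assms(3,5) that] by (metis of_int_add of_int_of_nat_eq)
    then show ?thesis
      using poly_binomial_poly[of "q - 1" "runner_count b r (beta_set k sigma)"] assms(2) by simp
  qed
  then show ?thesis
    unfolding N_sigma_eq_prod_binomial[OF assms] by (auto simp: of_nat_prod intro!: prod.cong)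
qed

theorem theorem12:
  fixes a b :: nat and sigma :: "nat list"
  assumes "0 < b" and "0 < a" and "b dvd a"
    and "is_partition sigma" and "is_core b sigma"
  shows "\<exists>Q :: nat \<Rightarrow> rat.
           quasipoly_deg_lead Q b (a - b) (1 / (of_nat (fact (a div b - 1))) ^ b) \<and>
           (\<forall>k \<ge> length sigma. of_nat (N_sigma a b sigma k) = Q k)"
proof -
  define q where "q = a div b"
  have a: "a = q * b" and "0 < q"
    using assms(1-3) unfolding q_def by auto
  define Q where "Q k = (\<Prod>r<b. poly (binomial_poly (q - 1))
    (of_int (runner_offset b sigma (k mod b) r) + of_nat (k div b)))" for k
  have "binomial_poly (q - 1) \<noteq> 0"
    using lead_coeff_binomial_poly[of "q - 1"] by auto
  then have "quasipoly_deg_lead Q b (b * degree (binomial_poly (q - 1)))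
      (lead_coeff (binomial_poly (q - 1)) ^ b)"
    unfolding Q_def by (rule quasipoly_deg_lead_prod_shifted)
  moreover have "b * (q - 1) = a - b"
    unfolding a by (simp add: diff_mult_distrib2 mult.commute)
  ultimately have "quasipoly_deg_lead Q b (a - b) ((1 / fact (q - 1)) ^ b)"
    by (simp only: lead_coeff_binomial_poly) (simp add: degree_binomial_poly)
  moreover have "of_nat (N_sigma a b sigma k) = Q k" if "length sigma \<le> k" for k
    unfolding a Q_def using N_sigma_eq_prod_binomial_poly[OF assms(1) \<open>0 < q\<close> assms(4,5) that] .
  ultimately show ?thesis
    unfolding q_def by (metis of_nat_fact power_one_over)
qed

end
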